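(* For every integer $N\ge 0$, let $T_{2\times 3}(7,N)$ be the number of tilings of a $7\times n$ rectangle, $n=6N/7$, by $N$ tiles of size $2\times 3$ (and $0$ if $6N/7\notin\mathbb{Z}$). Then, as formal power series, \[ \sum_{N\ge 0} T_{2\times 3}(7,N)\,z^N=\frac{1}{1-3z^7}. \]
   Context: A tiling of an $m\times n$ rectangle (width $m$, length $n$, made of $mn$ unit squares) by $a\times b$ tiles is a partition of the rectangle into non-overlapping axis-parallel $a\times b$ rectangles with integer corner coordinates, each placed in either of its two orientations. Tilings related by reflections or rotations of the rectangle are counted as distinct. The empty tiling counts once for $N=0$. *)

theory Defs
  imports Main "HOL-Computational_Algebra.Formal_Power_Series"
begin

text \<open>The axis-parallel w-by-h block of unit cells with lower-left corner (x,y);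
  the cell (i,j) is the unit square [i,i+1] x [j,j+1].\<close>
definition block :: "nat \<Rightarrow> nat \<Rightarrow> nat \<Rightarrow> nat \<Rightarrow> (nat \<times> nat) set" where
  "block x y w h = {x..<x+w} \<times> {y..<y+h}"

definition placements :: "nat \<Rightarrow> nat \<Rightarrow> (nat \<times> nat) set set" where
  "placements a b = {block x y a b | x y. True} \<union> {block x y b a | x y. True}"

definition is_tiling :: "nat \<Rightarrow> nat \<Rightarrow> nat \<Rightarrow> nat \<Rightarrow> (nat \<times> nat) set set \<Rightarrow> bool" where
  "is_tiling a b m n S \<longleftrightarrow>
     S \<subseteq> placements a b \<and> pairwise disjnt S \<and> \<Union>S = {0..<m} \<times> {0..<n}"

definition num_tilings :: "nat \<Rightarrow> nat \<Rightarrow> nat \<Rightarrow> nat \<Rightarrow> nat \<Rightarrow> nat" where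
  "num_tilings a b m n N = card {S. is_tiling a b m n S \<and> card S = N}"

definition T23_7 :: "nat \<Rightarrow> nat" where
  "T23_7 N = (if 7 dvd 6 * N then num_tilings 2 3 7 (6 * N div 7) N else 0)"

end

theory Submission
  imports Defs
begin

text \<open>
  Scan a tiling row by row, always covering the lowest leftmost uncovered cell; the uncovered
  part is then the region above a skyline profile, and the tile covering that cell is a
  horizontal or vertical tile with its lower left corner there. Enumerating this branching
  from the flat profile of width 7 shows that every branch either dies or returns to a flat
  profile exactly 6 rows higher, in precisely 3 ways. Hence the 7-by-6k rectangle has
  \<open>3^k\<close> tilings, each by \<open>7k\<close> tiles, and the generating function is
  \<open>\<Sum> 3^k z^(7k) = 1/(1 - 3z^7)\<close>.
\<close>

definition tilings :: "nat \<Rightarrow> nat \<Rightarrow> (nat \<times> nat) set \<Rightarrow> (nat \<times> nat) set set set" where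
  "tilings a b R = {S. S \<subseteq> placements a b \<and> pairwise disjnt S \<and> \<Union>S = R}"

lemma is_tiling_iff_tilings: "is_tiling a b m n S \<longleftrightarrow> S \<in> tilings a b ({0..<m} \<times> {0..<n})"
  by (simp add: is_tiling_def tilings_def)

lemma placement_cases:
  assumes "t \<in> placements a b"
  obtains x y where "t = block x y a b" | x y where "t = block x y b a"
  using assms unfolding placements_def by blast

lemma block_in_placements: "block x y a b \<in> placements a b" "block x y b a \<in> placements a b"
  by (auto simp: placements_def)

lemma finite_card_placement:
  assumes "t \<in> placements a b"
  shows "finite t" "card t = a * b"
  using assms by (auto elim: placement_cases simp: block_def)

lemma block_nonempty: "0 < w \<Longrightarrow> 0 < h \<Longrightarrow> block x y w h \<noteq> {}"
  by (simp add: block_def)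

lemma placement_nonempty:
  assumes "t \<in> placements a b" "0 < a" "0 < b"
  shows "t \<noteq> {}"
  using assms(1) by (cases rule: placement_cases) (use assms(2,3) block_nonempty in blast)+

lemma finite_tilings: "finite R \<Longrightarrow> finite (tilings a b R)"
  by (rule finite_subset[of _ "Pow (Pow R)"]) (auto simp: tilings_def)

lemma tilings_empty: "0 < a \<Longrightarrow> 0 < b \<Longrightarrow> tilings a b {} = {{}}"
  using placement_nonempty[of _ a b] by (auto simp: tilings_def)

lemma insert_in_tilings:
  assumes "S \<in> tilings a b (R - t)" "t \<subseteq> R" "t \<in> placements a b"
  shows "insert t S \<in> tilings a b R"
  using assms unfolding tilings_def by (auto simp: pairwise_insert disjnt_def)

lemma remove_in_tilings:
  assumes "S \<in> tilings a b R" "t \<in> S"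
  shows "S - {t} \<in> tilings a b (R - t)"
proof -
  have "u \<inter> t = {}" if "u \<in> S" "u \<noteq> t" for u
    using assms that unfolding tilings_def pairwise_def disjnt_def by blast
  then show ?thesis
    using assms unfolding tilings_def by (auto simp: pairwise_def)
qed

lemma card_tiled_region:
  assumes "S \<in> tilings a b R"
  shows "card R = a * b * card S"
proof -
  have S: "S \<subseteq> placements a b" "pairwise disjnt S" "\<Union>S = R"
    using assms by (auto simp: tilings_def)
  have "card R = (\<Sum>t\<in>S. card t)"
    unfolding S(3)[symmetric]
    by (rule card_Union_disjoint[OF S(2)]) (use S(1) finite_card_placement(1) in blast)
  also have "\<dots> = (\<Sum>t\<in>S. a * b)"
    using S(1) finite_card_placement(2) by (intro sum.cong) auto
  finally show ?thesis
    by simp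
qed

lemma num_tilings_eq_card_tilings:
  assumes "a * b * N = m * n" "0 < a" "0 < b"
  shows "num_tilings a b m n N = card (tilings a b ({0..<m} \<times> {0..<n}))"
proof -
  have "card S = N" if "S \<in> tilings a b ({0..<m} \<times> {0..<n})" for S
    using card_tiled_region[OF that] assms by simp
  then have "{S. S \<in> tilings a b ({0..<m} \<times> {0..<n}) \<and> card S = N} = tilings a b ({0..<m} \<times> {0..<n})"
    by blast
  then show ?thesis
    by (simp add: num_tilings_def is_tiling_iff_tilings)
qed

lemma card_tilings_containing:
  assumes "t \<in> placements a b" "0 < a" "0 < b" "finite R"
  shows "card {S \<in> tilings a b R. t \<in> S} = (if t \<subseteq> R then card (tilings a b (R - t)) else 0)"
proof (cases "t \<subseteq> R")
  case True
  have "t \<notin> S" if "S \<in> tilings a b (R - t)" for S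
    using that placement_nonempty[OF assms(1-3)] by (auto simp: tilings_def)
  then have "bij_betw (insert t) (tilings a b (R - t)) {S \<in> tilings a b R. t \<in> S}"
  proof (intro bij_betw_byWitness[where f' = "\<lambda>S. S - {t}"] ballI subsetI)
    fix S
    assume "S \<in> insert t ` tilings a b (R - t)"
    then show "S \<in> {S \<in> tilings a b R. t \<in> S}"
      using insert_in_tilings[OF _ True assms(1)] by auto
  next
    fix S
    assume "S \<in> (\<lambda>S. S - {t}) ` {S \<in> tilings a b R. t \<in> S}"
    then show "S \<in> tilings a b (R - t)"
      using remove_in_tilings by auto
  qed auto
  then show ?thesis
    using True by (simp add: bij_betw_same_card)
next
  case False
  then have "{S \<in> tilings a b R. t \<in> S} = {}"
    by (auto simp: tilings_def)
  with False show ?thesis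
    by (simp only: card.empty if_False)
qed

lemma lowest_corner_in_tiling:
  assumes "S \<in> tilings a b R" "(x, y) \<in> R"
    and lowest: "\<And>i j. (i, j) \<in> R \<Longrightarrow> y < j \<or> (y = j \<and> x \<le> i)"
  shows "block x y a b \<in> S \<or> block x y b a \<in> S"
proof -
  from assms(1,2) obtain t where t: "t \<in> S" "(x, y) \<in> t" "t \<subseteq> R"
    unfolding tilings_def by blast
  have "t \<in> placements a b"
    using assms(1) t(1) by (auto simp: tilings_def)
  then obtain x' y' w h where t_eq: "t = block x' y' w h" and wh: "w = a \<and> h = b \<or> w = b \<and> h = a"
    by (cases rule: placement_cases) auto
  have "(x', y') \<in> R" "x' \<le> x" "y' \<le> y"
    using t t_eq by (auto simp: block_def)
  then have "x' = x" "y' = y"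
    using lowest by fastforce+
  then show ?thesis
    using t(1) t_eq wh by auto
qed

lemma card_tilings_split:
  assumes "a \<noteq> b" "0 < a" "0 < b" "finite R" "(x, y) \<in> R"
    and lowest: "\<And>i j. (i, j) \<in> R \<Longrightarrow> y < j \<or> (y = j \<and> x \<le> i)"
  shows "card (tilings a b R) =
     (if block x y a b \<subseteq> R then card (tilings a b (R - block x y a b)) else 0) +
     (if block x y b a \<subseteq> R then card (tilings a b (R - block x y b a)) else 0)"
proof -
  define B1 B2 where "B1 = block x y a b" and "B2 = block x y b a"
  have B: "B1 \<in> placements a b" "B2 \<in> placements a b" "(x, y) \<in> B1" "(x, y) \<in> B2"
    using assms(2,3) block_in_placements by (auto simp: B1_def B2_def block_def)
  have "B1 \<noteq> B2"
  proof
    assume "B1 = B2"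
    then have "{x..<x + a} = {x..<x + b}"
      using assms(2,3) by (simp add: B1_def B2_def block_def times_eq_iff)
    then have "card {x..<x + a} = card {x..<x + b}"
      by simp
    then show False
      using assms(1) by simp
  qed
  have "tilings a b R = {S \<in> tilings a b R. B1 \<in> S} \<union> {S \<in> tilings a b R. B2 \<in> S}"
    using lowest_corner_in_tiling[OF _ assms(5) lowest] by (auto simp: B1_def B2_def)
  moreover have "{S \<in> tilings a b R. B1 \<in> S} \<inter> {S \<in> tilings a b R. B2 \<in> S} = {}"
    using \<open>B1 \<noteq> B2\<close> B(3,4) unfolding tilings_def pairwise_def disjnt_def by blast
  moreover have "finite (tilings a b R)"
    using assms(4) by (rule finite_tilings)
  ultimately have "card (tilings a b R) =
      card {S \<in> tilings a b R. B1 \<in> S} + card {S \<in> tilings a b R. B2 \<in> S}"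
    by (metis (no_types, lifting) card_Un_disjoint finite_Un)
  then show ?thesis
    using card_tilings_containing[OF _ assms(2-4)] B(1,2) by (simp add: B1_def B2_def)
qed

lemma length_take_drop_eq_iff: "length (take w (drop i p)) = w \<longleftrightarrow> (\<forall>c<w. i + c < length p)"
proof (cases w)
  case (Suc k)
  then show ?thesis
    by (auto simp: min_def dest!: spec[of _ k])
qed simp

lemma take_drop_eq_replicate_iff:
  "take w (drop i p) = replicate w m \<longleftrightarrow> (\<forall>c<w. i + c < length p \<and> p ! (i + c) = m)"
  using length_take_drop_eq_iff[of w i p] by (auto simp: list_eq_iff_nth_eq)

lemma length_takeWhile_less: "x \<in> set xs \<Longrightarrow> \<not> P x \<Longrightarrow> length (takeWhile P xs) < length xs"
  by (induction xs) auto

lemma nth_takeWhile_prefix: "c < length (takeWhile P xs) \<Longrightarrow> P (xs ! c)"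
  by (metis nth_mem set_takeWhileD takeWhile_nth)

definition raise_block :: "nat \<Rightarrow> nat \<Rightarrow> nat \<Rightarrow> nat list \<Rightarrow> nat list" where
  "raise_block i w v p = take i p @ replicate w v @ drop (i + w) p"

lemma nth_raise_block:
  assumes "i + w \<le> length p" "c < length p"
  shows "raise_block i w v p ! c = (if i \<le> c \<and> c < i + w then v else p ! c)"
  using assms by (auto simp: raise_block_def nth_append min_def)

lemma length_raise_block: "i + w \<le> length p \<Longrightarrow> length (raise_block i w v p) = length p"
  by (simp add: raise_block_def)

definition region_above :: "nat \<Rightarrow> nat list \<Rightarrow> (nat \<times> nat) set" where
  "region_above n p = {(i, j). i < length p \<and> p ! i \<le> j \<and> j < n}"

definition num_tilings_above :: "nat \<Rightarrow> nat \<Rightarrow> nat \<Rightarrow> nat list \<Rightarrow> nat" where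
  "num_tilings_above a b n p = card (tilings a b (region_above n p))"

lemma finite_region_above: "finite (region_above n p)"
  by (rule finite_subset[of _ "{..<length p} \<times> {..<n}"]) (auto simp: region_above_def)

lemma num_tilings_above_full:
  assumes "\<forall>x\<in>set p. n \<le> x" "0 < a" "0 < b"
  shows "num_tilings_above a b n p = 1"
proof -
  have "region_above n p = {}"
    using assms(1) nth_mem by (fastforce simp: region_above_def)
  then show ?thesis
    using assms(2,3) by (simp add: num_tilings_above_def tilings_empty)
qed

lemma block_subset_region_above_iff:
  assumes "\<forall>x\<in>set p. m \<le> x" "0 < w" "0 < h"
  shows "block i m w h \<subseteq> region_above n p \<longleftrightarrow> take w (drop i p) = replicate w m \<and> m + h \<le> n"
proof
  assume sub: "block i m w h \<subseteq> region_above n p"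
  have "i + c < length p \<and> p ! (i + c) = m" if "c < w" for c
  proof -
    have "(i + c, m) \<in> region_above n p"
      using sub that assms(3) by (auto simp: block_def)
    then have "i + c < length p" "p ! (i + c) \<le> m"
      by (auto simp: region_above_def)
    moreover have "m \<le> p ! (i + c)"
      using assms(1) nth_mem calculation(1) by blast
    ultimately show ?thesis
      by simp
  qed
  moreover have "(i, m + h - 1) \<in> region_above n p"
    using sub assms(2,3) by (auto simp: block_def)
  then have "m + h - 1 < n"
    by (simp add: region_above_def)
  then have "m + h \<le> n"
    using assms(3) by linarith
  ultimately show "take w (drop i p) = replicate w m \<and> m + h \<le> n"
    by (simp add: take_drop_eq_replicate_iff)
next
  assume fit: "take w (drop i p) = replicate w m \<and> m + h \<le> n"
  show "block i m w h \<subseteq> region_above n p"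
  proof (rule subsetI)
    fix q
    assume "q \<in> block i m w h"
    then obtain c j where q: "q = (c, j)" "i \<le> c" "c < i + w" "m \<le> j" "j < m + h"
      by (auto simp: block_def)
    have "\<forall>d<w. i + d < length p \<and> p ! (i + d) = m"
      using fit by (simp add: take_drop_eq_replicate_iff)
    moreover have "c - i < w"
      using q(2,3) by linarith
    ultimately have "i + (c - i) < length p \<and> p ! (i + (c - i)) = m"
      by blast
    then have "c < length p \<and> p ! c = m"
      using q(2) by simp
    then show "q \<in> region_above n p"
      using q fit by (simp add: region_above_def)
  qed
qed

lemma region_above_diff_block:
  assumes "take w (drop i p) = replicate w m" "0 < w"
  shows "region_above n p - block i m w h = region_above n (raise_block i w (m + h) p)"
proof -
  have base: "i + c < length p \<and> p ! (i + c) = m" if "c < w" for c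
    using assms(1) that by (simp add: take_drop_eq_replicate_iff)
  have "i + w \<le> length p"
    using base[of "w - 1"] assms(2) by linarith
  moreover have "p ! c = m" if "i \<le> c" "c < i + w" for c
    using base[of "c - i"] that by simp
  ultimately show ?thesis
    by (auto simp: region_above_def block_def nth_raise_block length_raise_block split: if_splits)
qed

lemma num_tilings_above_step:
  assumes "a \<noteq> b" "0 < a" "0 < b" "p \<noteq> []" "Min (set p) < n"
  shows "num_tilings_above a b n p =
    (let m = Min (set p); i = length (takeWhile (\<lambda>x. x \<noteq> m) p) in
      (if take a (drop i p) = replicate a m \<and> m + b \<le> n
       then num_tilings_above a b n (raise_block i a (m + b) p) else 0) +
      (if take b (drop i p) = replicate b m \<and> m + a \<le> n
       then num_tilings_above a b n (raise_block i b (m + a) p) else 0))"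
proof -
  \<comment> \<open>\<open>(i, m)\<close> is the lowest leftmost cell of the region\<close>
  define m where "m = Min (set p)"
  define i where "i = length (takeWhile (\<lambda>x. x \<noteq> m) p)"
  have m_le: "\<forall>x\<in>set p. m \<le> x"
    by (simp add: m_def)
  have "m \<in> set p"
    using assms(4) by (simp add: m_def)
  then have i: "i < length p"
    unfolding i_def by (rule length_takeWhile_less) simp
  then have "p ! i = m"
    using nth_length_takeWhile[of "\<lambda>x. x \<noteq> m" p] by (simp add: i_def)
  have corner: "(i, m) \<in> region_above n p"
    using i \<open>p ! i = m\<close> assms(5) by (simp add: region_above_def m_def)
  have lowest: "m < j \<or> (m = j \<and> i \<le> c)" if "(c, j) \<in> region_above n p" for c j
  proof (cases "m < j")
    case False
    have "c < length p" "p ! c \<le> j"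
      using that by (auto simp: region_above_def)
    then have "p ! c = m" "j = m"
      using False m_le nth_mem by force+
    moreover have "p ! c \<noteq> m" if "c < i"
      using nth_takeWhile_prefix[of c "\<lambda>x. x \<noteq> m" p] that by (simp add: i_def)
    ultimately show ?thesis
      using not_le by blast
  qed simp
  have "num_tilings_above a b n p =
      (if block i m a b \<subseteq> region_above n p
       then card (tilings a b (region_above n p - block i m a b)) else 0) +
      (if block i m b a \<subseteq> region_above n p
       then card (tilings a b (region_above n p - block i m b a)) else 0)"
    unfolding num_tilings_above_def
    by (rule card_tilings_split[OF assms(1-3) finite_region_above corner lowest])
  then show ?thesis
    using block_subset_region_above_iff[OF m_le] region_above_diff_block assms(2,3)
    by (simp add: num_tilings_above_def Let_def flip: m_def i_def)
qed

text \<open>The simplifier runs the recursion of \<open>num_tilings_above_step\<close> from the flat profile;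
  the hypothesis on \<open>n\<close> decides every height test \<open>m + 3 \<le> n\<close> met on the way.\<close>
lemma num_tilings_above_flat_step:
  assumes "n = c + 6 \<or> c + 12 \<le> n"
  shows "num_tilings_above 2 3 n (replicate 7 c) = 3 * num_tilings_above 2 3 n (replicate 7 (c + 6))"
  using assms by (auto simp: num_tilings_above_step numeral_eq_Suc raise_block_def Let_def)

lemma num_tilings_above_flat: "num_tilings_above 2 3 (c + 6 * k) (replicate 7 c) = 3 ^ k"
proof (induction k arbitrary: c)
  case 0
  then show ?case
    by (simp add: num_tilings_above_full)
next
  case (Suc k)
  have "c + 6 * Suc k = c + 6 \<or> c + 12 \<le> c + 6 * Suc k"
    by (cases k) auto
  then have "num_tilings_above 2 3 (c + 6 * Suc k) (replicate 7 c) =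
      3 * num_tilings_above 2 3 ((c + 6) + 6 * k) (replicate 7 (c + 6))"
    by (subst num_tilings_above_flat_step) (simp_all add: algebra_simps)
  then show ?case
    using Suc.IH by simp
qed

lemma region_above_replicate_0: "region_above n (replicate m 0) = {0..<m} \<times> {0..<n}"
  by (auto simp: region_above_def)

lemma T23_7_eq: "T23_7 N = (if 7 dvd N then 3 ^ (N div 7) else 0)"
proof (cases "7 dvd N")
  case True
  then obtain k where N: "N = 7 * k" ..
  have "T23_7 N = num_tilings 2 3 7 (6 * k) N"
    by (simp add: T23_7_def N)
  also have "\<dots> = num_tilings_above 2 3 (0 + 6 * k) (replicate 7 0)"
    by (simp add: num_tilings_eq_card_tilings N num_tilings_above_def region_above_replicate_0)
  also have "\<dots> = 3 ^ (N div 7)"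
    by (simp only: num_tilings_above_flat) (simp add: N)
  finally show ?thesis
    using True by simp
next
  case False
  then have "\<not> 7 dvd 6 * N"
    by presburger
  then show ?thesis
    using False by (simp add: T23_7_def)
qed

lemma fps_inverse_one_minus_X_power:
  fixes c :: "'a::field"
  assumes "0 < k"
  shows "Abs_fps (\<lambda>N. if k dvd N then c ^ (N div k) else 0) = 1 / (1 - fps_const c * fps_X ^ k)"
proof -
  define A where "A = Abs_fps (\<lambda>N. if k dvd N then c ^ (N div k) else 0)"
  have "(1 - fps_const c * fps_X ^ k) * A = A - fps_const c * (fps_X ^ k * A)"
    by (simp add: algebra_simps)
  also have "\<dots> = 1"
  proof (rule fps_ext)
    fix N
    show "fps_nth (A - fps_const c * (fps_X ^ k * A)) N = fps_nth 1 N"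
    proof (cases "N < k")
      case True
      then have "k dvd N \<longleftrightarrow> N = 0"
        using dvd_imp_le by fastforce
      then show ?thesis
        using True by (simp add: A_def fps_X_power_mult_nth)
    next
      case False
      then have "k dvd N \<longleftrightarrow> k dvd N - k" "k dvd N \<Longrightarrow> N div k = Suc ((N - k) div k)"
        using assms by (auto simp: dvd_minus_self div_if)
      then show ?thesis
        using False assms by (simp add: A_def fps_X_power_mult_nth)
    qed
  qed
  finally have "inverse (1 - fps_const c * fps_X ^ k) = A"
    by (rule fps_inverse_unique)
  then show ?thesis
    using assms by (simp add: A_def fps_divide_unit)
qed

theorem mainTheorem10:
  shows "Abs_fps (\<lambda>N. of_nat (T23_7 N)) = (1 / (1 - 3 * fps_X ^ 7) :: rat fps)"
proof -
  have "of_nat (T23_7 N) = (if 7 dvd N then (3::rat) ^ (N div 7) else 0)" for N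
    by (simp add: T23_7_eq)
  then have "Abs_fps (\<lambda>N. of_nat (T23_7 N)) = Abs_fps (\<lambda>N. if 7 dvd N then (3::rat) ^ (N div 7) else 0)"
    by simp
  also have "\<dots> = 1 / (1 - fps_const 3 * fps_X ^ 7)"
    by (rule fps_inverse_one_minus_X_power) simp
  finally show ?thesis
    by (simp add: fps_numeral_fps_const)
qed

end
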